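(* Let $\mathbb{F}\in\{\mathbb{R},\mathbb{C}\}$, let $N\ge2$, $M\ge2$ and $1\le Q\le M$ be integers, write $\mathcal{M}=\{1,\dots,M\}$, let $0<\epsilon<1$, and let $\mathbf{H}_1,\dots,\mathbf{H}_M$ be $N\times N$ positive semidefinite matrices (real symmetric if $\mathbb{F}=\mathbb{R}$, Hermitian if $\mathbb{F}=\mathbb{C}$). Let $(\hat{\boldsymbol\beta},\widehat{\mathbf{X}}^{(2)})$ be an optimal solution of (SDP3): maximize $\mathrm{Tr}[\mathbf{X}^{(2)}]$ over $\boldsymbol\beta\in\mathbb{R}^M$ and $N\times N$ matrices $\mathbf{X}^{(2)}\succeq0$ (real symmetric if $\mathbb{F}=\mathbb{R}$, Hermitian if $\mathbb{F}=\mathbb{C}$) subject to $\mathrm{Tr}[\mathbf{H}_i\mathbf{X}^{(2)}]\le\beta_i\epsilon+(1-\beta_i)$ for $i\in\mathcal{M}$, $\sum_{i\in\mathcal{M}}\beta_i=Q$, $0\le\beta_i\le1$. Let $\hat{\boldsymbol\beta}_{[Q]}$ be the $Q$-th largest entry of $\hat{\boldsymbol\beta}$ and $\widehat{\mathcal{I}}=\{i\in\mathcal{M}:\hat{\boldsymbol\beta}[i]\ge\hat{\boldsymbol\beta}_{[Q]}\}$. Then $\hat{\boldsymbol\beta}[i]\ge\frac{1}{M-Q+1}$ for all $i\in\widehat{\mathcal{I}}$.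
   Context: $\hat{\boldsymbol\beta}[i]$ denotes the $i$-th entry of $\hat{\boldsymbol\beta}$. *)

theory Defs
  imports "HOL-Analysis.Analysis"
begin

definition real_psd :: "real^'n^'n \<Rightarrow> bool" where
  "real_psd A \<longleftrightarrow> transpose A = A \<and> (\<forall>x::real^'n. 0 \<le> x \<bullet> (A *v x))"

definition complex_psd :: "complex^'n^'n \<Rightarrow> bool" where
  "complex_psd A \<longleftrightarrow> (\<forall>i j. A $ i $ j = cnj (A $ j $ i)) \<and>
     (\<forall>x::complex^'n. 0 \<le> Re (\<Sum>i\<in>UNIV. cnj (x $ i) * (A *v x) $ i))"

definition sdp3_feasible_real ::
  "nat \<Rightarrow> nat \<Rightarrow> real \<Rightarrow> (nat \<Rightarrow> real^'n^'n) \<Rightarrow> (nat \<Rightarrow> real) \<Rightarrow> real^'n^'n \<Rightarrow> bool" where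
  "sdp3_feasible_real M Q \<epsilon> H \<beta> X \<longleftrightarrow>
     real_psd X \<and>
     (\<forall>i\<in>{1..M}. trace (H i ** X) \<le> \<beta> i * \<epsilon> + (1 - \<beta> i)) \<and>
     (\<Sum>i=1..M. \<beta> i) = real Q \<and>
     (\<forall>i\<in>{1..M}. 0 \<le> \<beta> i \<and> \<beta> i \<le> 1)"

definition sdp3_optimal_real ::
  "nat \<Rightarrow> nat \<Rightarrow> real \<Rightarrow> (nat \<Rightarrow> real^'n^'n) \<Rightarrow> (nat \<Rightarrow> real) \<Rightarrow> real^'n^'n \<Rightarrow> bool" where
  "sdp3_optimal_real M Q \<epsilon> H \<beta> X \<longleftrightarrow>
     sdp3_feasible_real M Q \<epsilon> H \<beta> X \<and>
     (\<forall>\<beta>' X'. sdp3_feasible_real M Q \<epsilon> H \<beta>' X' \<longrightarrow> trace X' \<le> trace X)"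

text \<open>Feasibility for (SDP3), complex case (traces of products of Hermitian
  matrices are real; we compare their real parts).\<close>
definition sdp3_feasible_complex ::
  "nat \<Rightarrow> nat \<Rightarrow> real \<Rightarrow> (nat \<Rightarrow> complex^'n^'n) \<Rightarrow> (nat \<Rightarrow> real) \<Rightarrow> complex^'n^'n \<Rightarrow> bool" where
  "sdp3_feasible_complex M Q \<epsilon> H \<beta> X \<longleftrightarrow>
     complex_psd X \<and>
     (\<forall>i\<in>{1..M}. Re (trace (H i ** X)) \<le> \<beta> i * \<epsilon> + (1 - \<beta> i)) \<and>
     (\<Sum>i=1..M. \<beta> i) = real Q \<and>
     (\<forall>i\<in>{1..M}. 0 \<le> \<beta> i \<and> \<beta> i \<le> 1)"

definition sdp3_optimal_complex ::
  "nat \<Rightarrow> nat \<Rightarrow> real \<Rightarrow> (nat \<Rightarrow> complex^'n^'n) \<Rightarrow> (nat \<Rightarrow> real) \<Rightarrow> complex^'n^'n \<Rightarrow> bool" where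
  "sdp3_optimal_complex M Q \<epsilon> H \<beta> X \<longleftrightarrow>
     sdp3_feasible_complex M Q \<epsilon> H \<beta> X \<and>
     (\<forall>\<beta>' X'. sdp3_feasible_complex M Q \<epsilon> H \<beta>' X' \<longrightarrow> Re (trace X') \<le> Re (trace X))"

definition qth_largest :: "nat \<Rightarrow> nat \<Rightarrow> (nat \<Rightarrow> real) \<Rightarrow> real" where
  "qth_largest M Q \<beta> = rev (sort (map \<beta> [1..<M+1])) ! (Q - 1)"

end

theory Submission
  imports Defs
begin

text \<open>Only the constraints on \<beta> matter: the weights sum to Q and are at most 1. Sorting them in
  decreasing order, the Q-1 largest contribute at most Q-1 to the sum, and each of the remaining
  M-Q+1 is at most the Q-th largest, which therefore carries at least 1/(M-Q+1).\<close>

lemma sum_list_le_by_nth_of_sorted_desc: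
  fixes xs :: "'a :: linordered_idom list"
  assumes "sorted (rev xs)" and "\<forall>x\<in>set xs. x \<le> c" and "k < length xs"
  shows "sum_list xs \<le> of_nat k * c + of_nat (length xs - k) * xs ! k"
proof -
  let ?n = "length xs"
  have head: "xs ! j \<le> c" if "j < ?n" for j
    using assms(2) that by simp
  have tail: "xs ! j \<le> xs ! k" if "k \<le> j" "j < ?n" for j
  proof -
    have "rev xs ! (?n - 1 - j) \<le> rev xs ! (?n - 1 - k)"
      using assms(1) that by (intro sorted_nth_mono) auto
    then show ?thesis
      using that assms(3) by (simp add: rev_nth Suc_diff_Suc)
  qed
  have "sum_list xs = (\<Sum>j = 0..<k. xs ! j) + (\<Sum>j = k..<?n. xs ! j)"
    using assms(3) by (simp add: sum_list_sum_nth sum.atLeastLessThan_concat)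
  also have "\<dots> \<le> (\<Sum>j = 0..<k. c) + (\<Sum>j = k..<?n. xs ! k)"
    using assms(3) by (intro add_mono sum_mono) (auto intro: head tail)
  finally show ?thesis
    by simp
qed

lemma sum_list_sort_map_upt:
  fixes \<beta> :: "nat \<Rightarrow> 'a :: {linorder, comm_monoid_add}"
  shows "sum_list (sort (map \<beta> [1..<M+1])) = (\<Sum>i=1..M. \<beta> i)"
proof -
  have "sum_list (sort (map \<beta> [1..<M+1])) = sum_list (map \<beta> [1..<M+1])"
    by (metis mset_sort sum_mset_sum_list)
  also have "\<dots> = (\<Sum>i=1..M. \<beta> i)"
    by (simp add: sum_list_distinct_conv_sum_set atLeastLessThanSuc_atLeastAtMost del: upt_Suc)
  finally show ?thesis .
qed

lemma qth_largest_lower_bound: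
  fixes \<beta> :: "nat \<Rightarrow> real"
  assumes "1 \<le> Q" and "Q \<le> M"
    and sum: "(\<Sum>i=1..M. \<beta> i) = real Q" and le1: "\<forall>i\<in>{1..M}. \<beta> i \<le> 1"
  shows "1 / (real M - real Q + 1) \<le> qth_largest M Q \<beta>"
proof -
  define xs where "xs = rev (sort (map \<beta> [1..<M+1]))"
  have "real Q = sum_list xs"
    using sum sum_list_sort_map_upt[of \<beta> M] by (simp add: xs_def del: upt_Suc)
  also have "\<dots> \<le> real (Q - 1) * 1 + real (M - (Q - 1)) * xs ! (Q - 1)"
    using sum_list_le_by_nth_of_sorted_desc[of xs 1 "Q - 1"] assms(1,2) le1
    by (auto simp: xs_def)
  finally have "1 \<le> (real M - real Q + 1) * qth_largest M Q \<beta>"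
    using assms(1,2) by (simp add: qth_largest_def xs_def of_nat_diff algebra_simps)
  moreover have "0 < real M - real Q + 1"
    using assms(2) by simp
  ultimately show ?thesis
    by (simp add: divide_le_eq mult.commute)
qed

theorem lemma3p1:
  fixes M Q :: nat and \<epsilon> :: real
  assumes "CARD('n) \<ge> 2" and "M \<ge> 2" and "1 \<le> Q" and "Q \<le> M"
    and "0 < \<epsilon>" and "\<epsilon> < 1"
  shows
    "(\<forall>(H :: nat \<Rightarrow> real^'n^'n) \<beta> X.
        (\<forall>i\<in>{1..M}. real_psd (H i)) \<and> sdp3_optimal_real M Q \<epsilon> H \<beta> X \<longrightarrow>
        (\<forall>i\<in>{i\<in>{1..M}. \<beta> i \<ge> qth_largest M Q \<beta>}. \<beta> i \<ge> 1 / (real M - real Q + 1)))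
   \<and> (\<forall>(H :: nat \<Rightarrow> complex^'n^'n) \<beta> X.
        (\<forall>i\<in>{1..M}. complex_psd (H i)) \<and> sdp3_optimal_complex M Q \<epsilon> H \<beta> X \<longrightarrow>
        (\<forall>i\<in>{i\<in>{1..M}. \<beta> i \<ge> qth_largest M Q \<beta>}. \<beta> i \<ge> 1 / (real M - real Q + 1)))"
proof (intro conjI allI impI ballI)
  fix H :: "nat \<Rightarrow> real^'n^'n" and \<beta> X i
  assume "(\<forall>i\<in>{1..M}. real_psd (H i)) \<and> sdp3_optimal_real M Q \<epsilon> H \<beta> X"
    and "i \<in> {i\<in>{1..M}. \<beta> i \<ge> qth_largest M Q \<beta>}"
  with assms(3,4) show "\<beta> i \<ge> 1 / (real M - real Q + 1)"
    using qth_largest_lower_bound[of Q M \<beta>]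
    by (auto simp: sdp3_optimal_real_def sdp3_feasible_real_def)
next
  fix H :: "nat \<Rightarrow> complex^'n^'n" and \<beta> X i
  assume "(\<forall>i\<in>{1..M}. complex_psd (H i)) \<and> sdp3_optimal_complex M Q \<epsilon> H \<beta> X"
    and "i \<in> {i\<in>{1..M}. \<beta> i \<ge> qth_largest M Q \<beta>}"
  with assms(3,4) show "\<beta> i \<ge> 1 / (real M - real Q + 1)"
    using qth_largest_lower_bound[of Q M \<beta>]
    by (auto simp: sdp3_optimal_complex_def sdp3_feasible_complex_def)
qed

end
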